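(* Let $\{S_i\mid i\in I\}$ be a collection of semigroups and let $F=\prod^{*}\{S_i\mid i\in I\}$ be their semigroup free product. Then $F^1$ is finitely right equated if and only if each $S_i^1$ ($i\in I$) is finitely right equated.
   Context: $S^1$ denotes $S$ if $S$ is a monoid and otherwise $S$ with an identity adjoined. For a semigroup $S$ and $a\in S$, $\mathbf{r}_S(a)=\{(s,t)\in S\times S\mid as=at\}$; $S$ is finitely right equated if each $\mathbf{r}_S(a)$ is finitely generated as a right congruence. The semigroup free product of pairwise disjoint semigroups $S_i$ consists of sequences $s_1*\dots*s_n$ with $s_j\in\bigsqcup S_i$ and consecutive entries from different $S_i$, multiplied by concatenation, multiplying the two adjacent entries if they lie in the same $S_i$. *)

theory Defs
  imports Main
begin

record 'a sgrp =
  sg_carrier :: "'a set"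
  sg_mult :: "'a \<Rightarrow> 'a \<Rightarrow> 'a"

definition is_semigroup :: "'a sgrp \<Rightarrow> bool" where
  "is_semigroup S \<longleftrightarrow>
     (\<forall>x\<in>sg_carrier S. \<forall>y\<in>sg_carrier S. sg_mult S x y \<in> sg_carrier S) \<and>
     (\<forall>x\<in>sg_carrier S. \<forall>y\<in>sg_carrier S. \<forall>z\<in>sg_carrier S.
        sg_mult S (sg_mult S x y) z = sg_mult S x (sg_mult S y z))"

definition is_monoid_sg :: "'a sgrp \<Rightarrow> bool" where
  "is_monoid_sg S \<longleftrightarrow>
     (\<exists>e\<in>sg_carrier S. \<forall>x\<in>sg_carrier S. sg_mult S e x = x \<and> sg_mult S x e = x)"

text \<open>S^1: S itself if S is a monoid, otherwise S with a new identity adjoined.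
  Elements are tagged with Some; the adjoined identity is None.\<close>
definition adjoin_one :: "'a sgrp \<Rightarrow> 'a option sgrp" where
  "adjoin_one S =
     (if is_monoid_sg S then
        \<lparr> sg_carrier = Some ` sg_carrier S,
          sg_mult = (\<lambda>x y. Some (sg_mult S (the x) (the y))) \<rparr>
      else
        \<lparr> sg_carrier = insert None (Some ` sg_carrier S),
          sg_mult = (\<lambda>x y. case x of None \<Rightarrow> y
                                   | Some a \<Rightarrow> (case y of None \<Rightarrow> Some a
                                                      | Some b \<Rightarrow> Some (sg_mult S a b))) \<rparr>)"

definition right_congruence :: "'a sgrp \<Rightarrow> ('a \<times> 'a) set \<Rightarrow> bool" where
  "right_congruence T \<rho> \<longleftrightarrow> equiv (sg_carrier T) \<rho> \<and>
     (\<forall>s t u. (s, t) \<in> \<rho> \<longrightarrow> u \<in> sg_carrier T \<longrightarrow> (sg_mult T s u, sg_mult T t u) \<in> \<rho>)"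

definition rcong_gen :: "'a sgrp \<Rightarrow> ('a \<times> 'a) set \<Rightarrow> ('a \<times> 'a) set" where
  "rcong_gen T X = \<Inter> {\<rho>. right_congruence T \<rho> \<and> X \<subseteq> \<rho>}"

definition fin_gen_right_congruence :: "'a sgrp \<Rightarrow> ('a \<times> 'a) set \<Rightarrow> bool" where
  "fin_gen_right_congruence T \<rho> \<longleftrightarrow>
     (\<exists>X. finite X \<and> X \<subseteq> sg_carrier T \<times> sg_carrier T \<and> rcong_gen T X = \<rho>)"

definition r_ann :: "'a sgrp \<Rightarrow> 'a \<Rightarrow> ('a \<times> 'a) set" where
  "r_ann S a = {(s, t). s \<in> sg_carrier S \<and> t \<in> sg_carrier S \<and> sg_mult S a s = sg_mult S a t}"

definition fin_right_equated :: "'a sgrp \<Rightarrow> bool" where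
  "fin_right_equated S \<longleftrightarrow> (\<forall>a\<in>sg_carrier S. fin_gen_right_congruence S (r_ann S a))"

text \<open>The factors are made pairwise
  disjoint by tagging elements with their index: an element of the disjoint union is a pair
  (i, s) with i in I and s in S i.\<close>
definition fp_carrier :: "'i set \<Rightarrow> ('i \<Rightarrow> 'a sgrp) \<Rightarrow> ('i \<times> 'a) list set" where
  "fp_carrier I S = {w. w \<noteq> [] \<and> (\<forall>k<length w. fst (w ! k) \<in> I \<and> snd (w ! k) \<in> sg_carrier (S (fst (w ! k)))) \<and>
                         (\<forall>k. Suc k < length w \<longrightarrow> fst (w ! k) \<noteq> fst (w ! Suc k))}"

definition fp_mult :: "('i \<Rightarrow> 'a sgrp) \<Rightarrow> ('i \<times> 'a) list \<Rightarrow> ('i \<times> 'a) list \<Rightarrow> ('i \<times> 'a) list" where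
  "fp_mult S u v =
     (if u = [] then v else if v = [] then u
      else if fst (last u) = fst (hd v)
      then butlast u @ [(fst (last u), sg_mult (S (fst (last u))) (snd (last u)) (snd (hd v)))] @ tl v
      else u @ v)"

definition free_product :: "'i set \<Rightarrow> ('i \<Rightarrow> 'a sgrp) \<Rightarrow> ('i \<times> 'a) list sgrp" where
  "free_product I S = \<lparr> sg_carrier = fp_carrier I S, sg_mult = fp_mult S \<rparr>"

end

theory Submission
  imports Defs
begin

text \<open>Let \<open>T = F\<^sup>1\<close>.  A non-identity \<open>a \<in> T\<close> is a reduced word ending in a letter \<open>x\<close> of some
  factor \<open>S\<^sub>i\<close>.  In a product \<open>a s\<close> the letter \<open>x\<close> only interacts with the leading \<open>S\<^sub>i\<close>-letter \<open>h\<close> of \<open>s\<close>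
  (if any), so \<open>a s = a t\<close> iff \<open>s\<close> and \<open>t\<close> have the same remainder after that letter and
  \<open>x h\<^sub>s = x h\<^sub>t\<close> in \<open>S\<^sub>i\<^sup>1\<close>.  Hence \<open>r(a)\<close> is generated by the images of generators of \<open>r(x)\<close> in
  \<open>S\<^sub>i\<^sup>1\<close>, plus one pair identifying the identities of \<open>T\<close> and of \<open>S\<^sub>i\<close> when only the latter is a monoid.
  Conversely \<open>S\<^sub>i\<^sup>1\<close> is a retract of the subsemigroup of \<open>T\<close> of words of length at most one in \<open>S\<^sub>i\<close>,
  whose complement is an ideal, and projecting a generating set of \<open>r(x)\<close> in \<open>T\<close> generates \<open>r(x)\<close>
  in \<open>S\<^sub>i\<^sup>1\<close>.  The identity has the trivial right annihilator.\<close>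

section \<open>Right congruences\<close>

lemma
  assumes "is_semigroup T"
  shows is_semigroup_closed: "x \<in> sg_carrier T \<Longrightarrow> y \<in> sg_carrier T \<Longrightarrow> sg_mult T x y \<in> sg_carrier T"
    and is_semigroup_assoc: "x \<in> sg_carrier T \<Longrightarrow> y \<in> sg_carrier T \<Longrightarrow> z \<in> sg_carrier T \<Longrightarrow>
      sg_mult T (sg_mult T x y) z = sg_mult T x (sg_mult T y z)"
  using assms unfolding is_semigroup_def by blast+

lemma right_congruence_iff:
  "right_congruence T \<rho> \<longleftrightarrow> \<rho> \<subseteq> sg_carrier T \<times> sg_carrier T \<and>
     (\<forall>x\<in>sg_carrier T. (x, x) \<in> \<rho>) \<and> (\<forall>x y. (x, y) \<in> \<rho> \<longrightarrow> (y, x) \<in> \<rho>) \<and>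
     (\<forall>x y z. (x, y) \<in> \<rho> \<longrightarrow> (y, z) \<in> \<rho> \<longrightarrow> (x, z) \<in> \<rho>) \<and>
     (\<forall>s t u. (s, t) \<in> \<rho> \<longrightarrow> u \<in> sg_carrier T \<longrightarrow> (sg_mult T s u, sg_mult T t u) \<in> \<rho>)"
  unfolding right_congruence_def equiv_def refl_on_def sym_def trans_def by blast

lemma
  assumes "right_congruence T \<rho>"
  shows right_congruence_subset: "\<rho> \<subseteq> sg_carrier T \<times> sg_carrier T"
    and right_congruence_refl: "x \<in> sg_carrier T \<Longrightarrow> (x, x) \<in> \<rho>"
    and right_congruence_sym: "(x, y) \<in> \<rho> \<Longrightarrow> (y, x) \<in> \<rho>"
    and right_congruence_trans: "(x, y) \<in> \<rho> \<Longrightarrow> (y, z) \<in> \<rho> \<Longrightarrow> (x, z) \<in> \<rho>"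
    and right_congruence_mult_right:
      "(s, t) \<in> \<rho> \<Longrightarrow> u \<in> sg_carrier T \<Longrightarrow> (sg_mult T s u, sg_mult T t u) \<in> \<rho>"
  using assms unfolding right_congruence_iff by blast+

lemma right_congruenceI:
  assumes "\<rho> \<subseteq> sg_carrier T \<times> sg_carrier T"
    and "\<And>x. x \<in> sg_carrier T \<Longrightarrow> (x, x) \<in> \<rho>"
    and "\<And>x y. (x, y) \<in> \<rho> \<Longrightarrow> (y, x) \<in> \<rho>"
    and "\<And>x y z. (x, y) \<in> \<rho> \<Longrightarrow> (y, z) \<in> \<rho> \<Longrightarrow> (x, z) \<in> \<rho>"
    and "\<And>s t u. (s, t) \<in> \<rho> \<Longrightarrow> u \<in> sg_carrier T \<Longrightarrow> (sg_mult T s u, sg_mult T t u) \<in> \<rho>"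
  shows "right_congruence T \<rho>"
  unfolding right_congruence_iff using assms by blast

lemma right_congruence_Inter:
  assumes "\<F> \<noteq> {}" and rc: "\<And>\<rho>. \<rho> \<in> \<F> \<Longrightarrow> right_congruence T \<rho>"
  shows "right_congruence T (\<Inter>\<F>)"
proof (rule right_congruenceI)
  show "\<Inter>\<F> \<subseteq> sg_carrier T \<times> sg_carrier T"
    using assms right_congruence_subset by blast
  show "(x, x) \<in> \<Inter>\<F>" if "x \<in> sg_carrier T" for x
    using right_congruence_refl[OF rc that] by blast
  show "(y, x) \<in> \<Inter>\<F>" if "(x, y) \<in> \<Inter>\<F>" for x y
    using right_congruence_sym[OF rc InterD[OF that]] by blast
  show "(x, z) \<in> \<Inter>\<F>" if "(x, y) \<in> \<Inter>\<F>" "(y, z) \<in> \<Inter>\<F>" for x y z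
    using right_congruence_trans[OF rc InterD[OF that(1)] InterD[OF that(2)]] by blast
  show "(sg_mult T s u, sg_mult T t u) \<in> \<Inter>\<F>"
    if "(s, t) \<in> \<Inter>\<F>" "u \<in> sg_carrier T" for s t u
    using right_congruence_mult_right[OF rc InterD[OF that(1)] that(2)] by blast
qed

lemma right_congruence_rcong_gen:
  assumes "is_semigroup T" and "X \<subseteq> sg_carrier T \<times> sg_carrier T"
  shows "right_congruence T (rcong_gen T X)"
proof -
  have "right_congruence T (sg_carrier T \<times> sg_carrier T)"
    using is_semigroup_closed[OF assms(1)] by (auto simp: right_congruence_iff)
  then show ?thesis
    unfolding rcong_gen_def using assms(2) by (intro right_congruence_Inter) auto
qed

lemma rcong_gen_least: "right_congruence T \<rho> \<Longrightarrow> X \<subseteq> \<rho> \<Longrightarrow> rcong_gen T X \<subseteq> \<rho>"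
  by (auto simp: rcong_gen_def)

lemma subset_rcong_gen: "X \<subseteq> rcong_gen T X"
  by (auto simp: rcong_gen_def)

lemma rcong_gen_mono: "X \<subseteq> Y \<Longrightarrow> rcong_gen T X \<subseteq> rcong_gen T Y"
  unfolding rcong_gen_def by blast

lemma fin_gen_right_congruenceI:
  assumes "finite X" and "X \<subseteq> sg_carrier T \<times> sg_carrier T" and "X \<subseteq> \<rho>"
    and "\<rho> \<subseteq> rcong_gen T X" and "right_congruence T \<rho>"
  shows "fin_gen_right_congruence T \<rho>"
  using rcong_gen_least[OF assms(5,3)] assms(1,2,4) unfolding fin_gen_right_congruence_def by blast

lemma right_congruence_r_ann:
  assumes T: "is_semigroup T" and a: "a \<in> sg_carrier T"
  shows "right_congruence T (r_ann T a)"
proof (rule right_congruenceI)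
  fix s t u assume st: "(s, t) \<in> r_ann T a" and u: "u \<in> sg_carrier T"
  then have s: "s \<in> sg_carrier T" and t: "t \<in> sg_carrier T"
    and eq: "sg_mult T a s = sg_mult T a t"
    by (auto simp: r_ann_def)
  have "sg_mult T a (sg_mult T s u) = sg_mult T (sg_mult T a s) u"
    using is_semigroup_assoc[OF T a s u] by simp
  also have "\<dots> = sg_mult T a (sg_mult T t u)"
    using is_semigroup_assoc[OF T a t u] eq by simp
  finally show "(sg_mult T s u, sg_mult T t u) \<in> r_ann T a"
    using is_semigroup_closed[OF T] s t u by (simp add: r_ann_def)
qed (auto simp: r_ann_def)

lemma fin_gen_r_ann_left_identity:
  assumes T: "is_semigroup T" and e: "e \<in> sg_carrier T"
    and left_id: "\<And>x. x \<in> sg_carrier T \<Longrightarrow> sg_mult T e x = x"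
  shows "fin_gen_right_congruence T (r_ann T e)"
proof (rule fin_gen_right_congruenceI[where X = "{}"])
  show "r_ann T e \<subseteq> rcong_gen T {}"
    using right_congruence_refl[OF right_congruence_rcong_gen[OF T]] left_id
    by (auto simp: r_ann_def)
qed (simp_all add: right_congruence_r_ann[OF T e])

lemma rcong_gen_hom_image:
  assumes T: "is_semigroup T" and U: "is_semigroup U"
    and f: "\<And>u. u \<in> sg_carrier U \<Longrightarrow> f u \<in> sg_carrier T"
    and f_mult: "\<And>u v. u \<in> sg_carrier U \<Longrightarrow> v \<in> sg_carrier U \<Longrightarrow>
        f (sg_mult U u v) = sg_mult T (f u) (f v)"
    and Y: "Y \<subseteq> sg_carrier U \<times> sg_carrier U"
  shows "map_prod f f ` rcong_gen U Y \<subseteq> rcong_gen T (map_prod f f ` Y)"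
proof -
  define \<rho> where "\<rho> = rcong_gen T (map_prod f f ` Y)"
  have \<rho>: "right_congruence T \<rho>"
    unfolding \<rho>_def using Y f by (intro right_congruence_rcong_gen[OF T]) auto
  define \<pi> where "\<pi> = {(u, v). u \<in> sg_carrier U \<and> v \<in> sg_carrier U \<and> (f u, f v) \<in> \<rho>}"
  have "right_congruence U \<pi>"
  proof (rule right_congruenceI)
    show "\<pi> \<subseteq> sg_carrier U \<times> sg_carrier U"
      by (auto simp: \<pi>_def)
    show "(u, u) \<in> \<pi>" if "u \<in> sg_carrier U" for u
      using that right_congruence_refl[OF \<rho> f[OF that]] by (simp add: \<pi>_def)
    show "(v, u) \<in> \<pi>" if "(u, v) \<in> \<pi>" for u v
      using that right_congruence_sym[OF \<rho>] by (simp add: \<pi>_def)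
    show "(u, w) \<in> \<pi>" if "(u, v) \<in> \<pi>" "(v, w) \<in> \<pi>" for u v w
      using that right_congruence_trans[OF \<rho>, of "f u" "f v" "f w"] by (simp add: \<pi>_def)
    fix u v w assume "(u, v) \<in> \<pi>" and w: "w \<in> sg_carrier U"
    then have "u \<in> sg_carrier U" "v \<in> sg_carrier U" "(f u, f v) \<in> \<rho>"
      by (auto simp: \<pi>_def)
    then show "(sg_mult U u w, sg_mult U v w) \<in> \<pi>"
      using right_congruence_mult_right[OF \<rho> _ f[OF w]] is_semigroup_closed[OF U] w
      by (simp add: \<pi>_def f_mult)
  qed
  moreover have "Y \<subseteq> \<pi>"
  proof
    fix y assume "y \<in> Y"
    moreover have "map_prod f f y \<in> \<rho>"
      using \<open>y \<in> Y\<close> subset_rcong_gen[of "map_prod f f ` Y" T] by (auto simp: \<rho>_def)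
    ultimately show "y \<in> \<pi>"
      using Y by (cases y) (auto simp: \<pi>_def)
  qed
  ultimately have "rcong_gen U Y \<subseteq> \<pi>"
    by (rule rcong_gen_least)
  then show ?thesis
    unfolding \<pi>_def \<rho>_def by auto
qed

lemma rcong_gen_partial_hom_image:
  assumes T: "is_semigroup T" and U: "is_semigroup U"
    and R_mult_iff: "\<And>p q. p \<in> sg_carrier T \<Longrightarrow> q \<in> sg_carrier T \<Longrightarrow>
        sg_mult T p q \<in> R \<longleftrightarrow> p \<in> R \<and> q \<in> R"
    and g: "\<And>p. p \<in> R \<Longrightarrow> g p \<in> sg_carrier U"
    and g_mult: "\<And>p q. p \<in> R \<Longrightarrow> q \<in> R \<Longrightarrow> g (sg_mult T p q) = sg_mult U (g p) (g q)"
    and X: "X \<subseteq> sg_carrier T \<times> sg_carrier T"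
    and X_R: "\<And>p q. (p, q) \<in> X \<Longrightarrow> p \<in> R \<longleftrightarrow> q \<in> R"
  shows "map_prod g g ` (rcong_gen T X \<inter> R \<times> R) \<subseteq> rcong_gen U (map_prod g g ` (X \<inter> R \<times> R))"
proof -
  define \<rho> where "\<rho> = rcong_gen U (map_prod g g ` (X \<inter> R \<times> R))"
  have \<rho>: "right_congruence U \<rho>"
    unfolding \<rho>_def using X g by (intro right_congruence_rcong_gen[OF U]) auto
  define \<sigma> where "\<sigma> = {(p, q). p \<in> sg_carrier T \<and> q \<in> sg_carrier T \<and>
      (p \<in> R \<longleftrightarrow> q \<in> R) \<and> (p \<in> R \<longrightarrow> (g p, g q) \<in> \<rho>)}"
  have "right_congruence T \<sigma>"
  proof (rule right_congruenceI)
    show "\<sigma> \<subseteq> sg_carrier T \<times> sg_carrier T"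
      by (auto simp: \<sigma>_def)
    show "(p, p) \<in> \<sigma>" if "p \<in> sg_carrier T" for p
      using that right_congruence_refl[OF \<rho> g] by (simp add: \<sigma>_def)
    show "(q, p) \<in> \<sigma>" if "(p, q) \<in> \<sigma>" for p q
      using that right_congruence_sym[OF \<rho>] by (auto simp: \<sigma>_def)
    show "(p, r) \<in> \<sigma>" if "(p, q) \<in> \<sigma>" "(q, r) \<in> \<sigma>" for p q r
      using that right_congruence_trans[OF \<rho>, of "g p" "g q" "g r"] by (auto simp: \<sigma>_def)
    fix p q u assume "(p, q) \<in> \<sigma>" and u: "u \<in> sg_carrier T"
    then have p: "p \<in> sg_carrier T" and q: "q \<in> sg_carrier T" and pq: "p \<in> R \<longleftrightarrow> q \<in> R"
      and g_pq: "p \<in> R \<Longrightarrow> (g p, g q) \<in> \<rho>"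
      by (auto simp: \<sigma>_def)
    have "(g (sg_mult T p u), g (sg_mult T q u)) \<in> \<rho>" if "p \<in> R" "u \<in> R"
      using right_congruence_mult_right[OF \<rho> g_pq g] that pq g_mult by simp
    then show "(sg_mult T p u, sg_mult T q u) \<in> \<sigma>"
      using R_mult_iff[OF p u] R_mult_iff[OF q u] pq is_semigroup_closed[OF T] p q u
      by (auto simp: \<sigma>_def)
  qed
  moreover have "X \<subseteq> \<sigma>"
  proof
    fix y assume "y \<in> X"
    moreover have "y \<in> R \<times> R \<Longrightarrow> map_prod g g y \<in> \<rho>"
      using \<open>y \<in> X\<close> subset_rcong_gen[of "map_prod g g ` (X \<inter> R \<times> R)" U] by (auto simp: \<rho>_def)
    ultimately show "y \<in> \<sigma>"
      using X X_R by (cases y) (auto simp: \<sigma>_def)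
  qed
  ultimately have "rcong_gen T X \<subseteq> \<sigma>"
    by (rule rcong_gen_least)
  then show ?thesis
    unfolding \<sigma>_def \<rho>_def by auto
qed

section \<open>Transfer along a retraction\<close>

text \<open>Assumption \<open>mult_in_R_iff\<close> says that \<open>R\<close> is a subsemigroup of \<open>T\<close> whose complement is an ideal.\<close>
locale sg_retract =
  fixes T :: "'t sgrp" and U :: "'u sgrp" and R :: "'t set"
    and proj :: "'t \<Rightarrow> 'u" and emb :: "'u \<Rightarrow> 't"
  assumes semigroup_T: "is_semigroup T" and semigroup_U: "is_semigroup U"
    and R_subset: "R \<subseteq> sg_carrier T"
    and mult_in_R_iff: "\<And>p q. p \<in> sg_carrier T \<Longrightarrow> q \<in> sg_carrier T \<Longrightarrow>
        sg_mult T p q \<in> R \<longleftrightarrow> p \<in> R \<and> q \<in> R"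
    and proj_in: "\<And>p. p \<in> R \<Longrightarrow> proj p \<in> sg_carrier U"
    and proj_mult: "\<And>p q. p \<in> R \<Longrightarrow> q \<in> R \<Longrightarrow> proj (sg_mult T p q) = sg_mult U (proj p) (proj q)"
    and emb_in: "\<And>u. u \<in> sg_carrier U \<Longrightarrow> emb u \<in> R"
    and proj_emb: "\<And>u. u \<in> sg_carrier U \<Longrightarrow> proj (emb u) = u"
    and emb_mult: "\<And>u v. u \<in> sg_carrier U \<Longrightarrow> v \<in> sg_carrier U \<Longrightarrow>
        emb (sg_mult U u v) = sg_mult T (emb u) (emb v)"
begin

lemma emb_in_carrier: "u \<in> sg_carrier U \<Longrightarrow> emb u \<in> sg_carrier T"
  using emb_in R_subset by blast

lemma r_ann_emb_in_R_iff:
  assumes x: "x \<in> sg_carrier U" and pq: "(p, q) \<in> r_ann T (emb x)"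
  shows "p \<in> R \<longleftrightarrow> q \<in> R"
proof -
  have "p \<in> sg_carrier T" "q \<in> sg_carrier T" "sg_mult T (emb x) p = sg_mult T (emb x) q"
    using pq by (auto simp: r_ann_def)
  then show ?thesis
    using mult_in_R_iff emb_in_carrier[OF x] emb_in[OF x] by metis
qed

lemma proj_r_ann_emb:
  assumes x: "x \<in> sg_carrier U" and pq: "(p, q) \<in> r_ann T (emb x)" and p: "p \<in> R" and q: "q \<in> R"
  shows "(proj p, proj q) \<in> r_ann U x"
proof -
  have "sg_mult T (emb x) p = sg_mult T (emb x) q"
    using pq by (auto simp: r_ann_def)
  then have "sg_mult U x (proj p) = sg_mult U x (proj q)"
    using proj_mult[OF emb_in[OF x]] proj_emb[OF x] p q by metis
  then show ?thesis
    using p q proj_in by (auto simp: r_ann_def)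
qed

lemma fin_gen_r_ann_of_emb:
  assumes x: "x \<in> sg_carrier U"
    and fg: "fin_gen_right_congruence T (r_ann T (emb x))"
  shows "fin_gen_right_congruence U (r_ann U x)"
proof -
  obtain X where X: "finite X" "X \<subseteq> sg_carrier T \<times> sg_carrier T"
    and gen: "rcong_gen T X = r_ann T (emb x)"
    using fg unfolding fin_gen_right_congruence_def by blast
  have X_ann: "X \<subseteq> r_ann T (emb x)"
    using subset_rcong_gen[of X T] gen by simp
  define Y where "Y = map_prod proj proj ` (X \<inter> R \<times> R)"
  show ?thesis
  proof (rule fin_gen_right_congruenceI[where X = Y])
    show "finite Y" "Y \<subseteq> sg_carrier U \<times> sg_carrier U"
      using X(1) proj_in by (auto simp: Y_def)
    show "right_congruence U (r_ann U x)"
      by (rule right_congruence_r_ann[OF semigroup_U x])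
    show "Y \<subseteq> r_ann U x"
      using proj_r_ann_emb[OF x] X_ann by (auto simp: Y_def)
    show "r_ann U x \<subseteq> rcong_gen U Y"
    proof
      fix y assume "y \<in> r_ann U x"
      then obtain u v where y: "y = (u, v)" and u: "u \<in> sg_carrier U" and v: "v \<in> sg_carrier U"
        and eq: "sg_mult U x u = sg_mult U x v"
        by (auto simp: r_ann_def)
      have "(emb u, emb v) \<in> rcong_gen T X \<inter> R \<times> R"
        using gen eq emb_mult[OF x u] emb_mult[OF x v] emb_in u v emb_in_carrier
        by (auto simp: r_ann_def)
      then have "map_prod proj proj (emb u, emb v) \<in> rcong_gen U Y"
        using rcong_gen_partial_hom_image[OF semigroup_T semigroup_U mult_in_R_iff proj_in proj_mult X(2)]
          r_ann_emb_in_R_iff[OF x] X_ann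
        unfolding Y_def by blast
      then show "y \<in> rcong_gen U Y"
        using y proj_emb u v by simp
    qed
  qed
qed

lemma r_ann_subset_of_split:
  assumes \<rho>: "right_congruence T \<rho>"
    and emb_ann: "\<And>u v. (u, v) \<in> r_ann U x \<Longrightarrow> (emb u, emb v) \<in> \<rho>"
    and to_emb: "\<And>p. p \<in> R \<Longrightarrow> (p, emb (proj p)) \<in> \<rho>"
    and split: "\<And>s. s \<in> sg_carrier T \<Longrightarrow>
        head s \<in> R \<and> tail s \<in> sg_carrier T \<and> s = sg_mult T (head s) (tail s)"
    and cancel: "\<And>s t. s \<in> sg_carrier T \<Longrightarrow> t \<in> sg_carrier T \<Longrightarrow> sg_mult T a s = sg_mult T a t \<Longrightarrow>
        tail s = tail t \<and> sg_mult U x (proj (head s)) = sg_mult U x (proj (head t))"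
  shows "r_ann T a \<subseteq> \<rho>"
proof
  fix y assume "y \<in> r_ann T a"
  then obtain s t where y: "y = (s, t)" and s: "s \<in> sg_carrier T" and t: "t \<in> sg_carrier T"
    and eq: "sg_mult T a s = sg_mult T a t"
    by (auto simp: r_ann_def)
  note hs = split[OF s] and ht = split[OF t]
  have "(proj (head s), proj (head t)) \<in> r_ann U x"
    using cancel[OF s t eq] hs ht proj_in by (auto simp: r_ann_def)
  then have "(head s, head t) \<in> \<rho>"
    using right_congruence_trans[OF \<rho> to_emb right_congruence_trans[OF \<rho> emb_ann
        right_congruence_sym[OF \<rho> to_emb]]] hs ht by blast
  then have "(sg_mult T (head s) (tail s), sg_mult T (head t) (tail t)) \<in> \<rho>"
    using right_congruence_mult_right[OF \<rho>] hs cancel[OF s t eq] by metis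
  then show "y \<in> \<rho>"
    using hs ht y by simp
qed

text \<open>The generators of \<open>r_ann T a\<close> are the images of those of \<open>r_ann U x\<close> together with the pairs
  \<open>(p, emb (proj p))\<close> for the elements \<open>p\<close> of \<open>R\<close> outside the image of \<open>emb\<close>.\<close>
lemma fin_gen_r_ann_of_split:
  assumes x: "x \<in> sg_carrier U" and a': "a' \<in> sg_carrier T"
    and a: "a = sg_mult T a' (emb x)"
    and emb_x_mult: "\<And>p. p \<in> R \<Longrightarrow> sg_mult T (emb x) p = emb (sg_mult U x (proj p))"
    and finite_defect: "finite {p \<in> R. p \<noteq> emb (proj p)}"
    and split: "\<And>s. s \<in> sg_carrier T \<Longrightarrow>
        head s \<in> R \<and> tail s \<in> sg_carrier T \<and> s = sg_mult T (head s) (tail s)"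
    and cancel: "\<And>s t. s \<in> sg_carrier T \<Longrightarrow> t \<in> sg_carrier T \<Longrightarrow> sg_mult T a s = sg_mult T a t \<Longrightarrow>
        tail s = tail t \<and> sg_mult U x (proj (head s)) = sg_mult U x (proj (head t))"
    and fg: "fin_gen_right_congruence U (r_ann U x)"
  shows "fin_gen_right_congruence T (r_ann T a)"
proof -
  obtain Y where Y: "finite Y" "Y \<subseteq> sg_carrier U \<times> sg_carrier U"
    and gen: "rcong_gen U Y = r_ann U x"
    using fg unfolding fin_gen_right_congruence_def by blast
  have a_mult: "sg_mult T a p = sg_mult T a' (emb (sg_mult U x (proj p)))" if "p \<in> R" for p
    using is_semigroup_assoc[OF semigroup_T a' emb_in_carrier[OF x]] emb_x_mult[OF that] that R_subset a
    by auto
  have a_mult_emb: "sg_mult T a (emb u) = sg_mult T a' (emb (sg_mult U x u))" if "u \<in> sg_carrier U" for u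
    using a_mult[OF emb_in[OF that]] proj_emb[OF that] by simp
  have aT: "a \<in> sg_carrier T"
    using is_semigroup_closed[OF semigroup_T a' emb_in_carrier[OF x]] a by simp
  define G where "G = map_prod emb emb ` Y \<union> (\<lambda>p. (p, emb (proj p))) ` {p \<in> R. p \<noteq> emb (proj p)}"
  have G: "G \<subseteq> sg_carrier T \<times> sg_carrier T"
    using Y(2) R_subset emb_in_carrier proj_in by (auto simp: G_def)
  have \<rho>: "right_congruence T (rcong_gen T G)"
    by (rule right_congruence_rcong_gen[OF semigroup_T G])
  show ?thesis
  proof (rule fin_gen_right_congruenceI[OF _ G])
    show "finite G"
      using Y(1) finite_defect by (simp add: G_def)
    show "right_congruence T (r_ann T a)"
      by (rule right_congruence_r_ann[OF semigroup_T aT])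
    have "(emb u, emb v) \<in> r_ann T a" if "(u, v) \<in> r_ann U x" for u v
      using that a_mult_emb emb_in_carrier by (auto simp: r_ann_def)
    moreover have "(p, emb (proj p)) \<in> r_ann T a" if "p \<in> R" for p
      using that a_mult[OF that] a_mult_emb[OF proj_in[OF that]] R_subset emb_in_carrier proj_in
      by (auto simp: r_ann_def)
    ultimately show "G \<subseteq> r_ann T a"
      using gen subset_rcong_gen[of Y U] by (auto simp: G_def)
    show "r_ann T a \<subseteq> rcong_gen T G"
    proof (rule r_ann_subset_of_split[OF \<rho> _ _ split cancel])
      show "(emb u, emb v) \<in> rcong_gen T G" if "(u, v) \<in> r_ann U x" for u v
        using rcong_gen_hom_image[OF semigroup_T semigroup_U emb_in_carrier emb_mult Y(2)] that gen
          rcong_gen_mono[of "map_prod emb emb ` Y" G T] by (force simp: G_def)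
      show "(p, emb (proj p)) \<in> rcong_gen T G" if "p \<in> R" for p
        using that right_congruence_refl[OF \<rho>] R_subset subset_rcong_gen[of G T]
        by (cases "p = emb (proj p)") (auto simp: G_def)
    qed
  qed
qed

end

section \<open>Adjoining an identity\<close>

definition sg_one :: "'a sgrp \<Rightarrow> 'a" where
  "sg_one M = (SOME e. e \<in> sg_carrier M \<and> (\<forall>x\<in>sg_carrier M. sg_mult M e x = x \<and> sg_mult M x e = x))"

definition adjoin_one_unit :: "'a sgrp \<Rightarrow> 'a option" where
  "adjoin_one_unit M = (if is_monoid_sg M then Some (sg_one M) else None)"

lemma
  assumes "is_monoid_sg M"
  shows sg_one_in: "sg_one M \<in> sg_carrier M"
    and sg_one_mult: "x \<in> sg_carrier M \<Longrightarrow> sg_mult M (sg_one M) x = x"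
    and mult_sg_one: "x \<in> sg_carrier M \<Longrightarrow> sg_mult M x (sg_one M) = x"
proof -
  have "\<exists>e. e \<in> sg_carrier M \<and> (\<forall>x\<in>sg_carrier M. sg_mult M e x = x \<and> sg_mult M x e = x)"
    using assms unfolding is_monoid_sg_def by blast
  from someI_ex[OF this] show "sg_one M \<in> sg_carrier M"
    and "x \<in> sg_carrier M \<Longrightarrow> sg_mult M (sg_one M) x = x"
    and "x \<in> sg_carrier M \<Longrightarrow> sg_mult M x (sg_one M) = x"
    unfolding sg_one_def by blast+
qed

lemma sg_one_unique:
  assumes "e \<in> sg_carrier M" and "\<And>x. x \<in> sg_carrier M \<Longrightarrow> sg_mult M e x = x \<and> sg_mult M x e = x"
  shows "is_monoid_sg M" and "sg_one M = e"
proof -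
  show M: "is_monoid_sg M"
    using assms unfolding is_monoid_sg_def by blast
  show "sg_one M = e"
    using assms(2)[OF sg_one_in[OF M]] mult_sg_one[OF M assms(1)] by simp
qed

lemma Some_in_adjoin_one_iff [simp]: "Some a \<in> sg_carrier (adjoin_one M) \<longleftrightarrow> a \<in> sg_carrier M"
  by (auto simp: adjoin_one_def)

lemma None_in_adjoin_one_iff: "None \<in> sg_carrier (adjoin_one M) \<longleftrightarrow> \<not> is_monoid_sg M"
  by (auto simp: adjoin_one_def)

lemma adjoin_one_carrier_cases:
  assumes "p \<in> sg_carrier (adjoin_one M)"
  obtains "p = None" | a where "a \<in> sg_carrier M" "p = Some a"
  using assms by (auto simp: adjoin_one_def split: if_splits)

lemma adjoin_one_mult_Some [simp]: "sg_mult (adjoin_one M) (Some a) (Some b) = Some (sg_mult M a b)"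
  by (auto simp: adjoin_one_def)

lemma
  assumes "None \<in> sg_carrier (adjoin_one M)"
  shows adjoin_one_mult_None_left: "sg_mult (adjoin_one M) None p = p"
    and adjoin_one_mult_None_right: "sg_mult (adjoin_one M) p None = p"
  using assms by (auto simp: adjoin_one_def split: option.splits)

lemma adjoin_one_unit_in: "adjoin_one_unit M \<in> sg_carrier (adjoin_one M)"
  using sg_one_in[of M] by (auto simp: adjoin_one_unit_def None_in_adjoin_one_iff)

lemma
  assumes "p \<in> sg_carrier (adjoin_one M)"
  shows adjoin_one_unit_mult: "sg_mult (adjoin_one M) (adjoin_one_unit M) p = p"
    and mult_adjoin_one_unit: "sg_mult (adjoin_one M) p (adjoin_one_unit M) = p"
proof -
  have "sg_mult (adjoin_one M) (adjoin_one_unit M) p = p \<and> sg_mult (adjoin_one M) p (adjoin_one_unit M) = p"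
  proof (cases "is_monoid_sg M")
    case True
    from assms show ?thesis
      by (cases rule: adjoin_one_carrier_cases)
        (use assms True in \<open>auto simp: adjoin_one_unit_def sg_one_mult mult_sg_one None_in_adjoin_one_iff\<close>)
  next
    case False
    then show ?thesis
      by (simp add: adjoin_one_unit_def adjoin_one_mult_None_left adjoin_one_mult_None_right
          None_in_adjoin_one_iff)
  qed
  then show "sg_mult (adjoin_one M) (adjoin_one_unit M) p = p"
    and "sg_mult (adjoin_one M) p (adjoin_one_unit M) = p" by simp_all
qed

lemma is_semigroup_adjoin_one:
  assumes "is_semigroup M"
  shows "is_semigroup (adjoin_one M)"
  using assms unfolding is_semigroup_def adjoin_one_def by (auto split: option.splits)

lemma fin_right_equated_adjoin_oneI:
  assumes "is_semigroup M"
    and "\<And>x. x \<in> sg_carrier M \<Longrightarrow> fin_gen_right_congruence (adjoin_one M) (r_ann (adjoin_one M) (Some x))"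
  shows "fin_right_equated (adjoin_one M)"
  unfolding fin_right_equated_def
proof
  fix u assume u: "u \<in> sg_carrier (adjoin_one M)"
  then show "fin_gen_right_congruence (adjoin_one M) (r_ann (adjoin_one M) u)"
  proof (cases rule: adjoin_one_carrier_cases)
    case 1
    then show ?thesis
      using fin_gen_r_ann_left_identity[OF is_semigroup_adjoin_one[OF assms(1)]] u
        adjoin_one_mult_None_left by metis
  qed (use assms(2) in simp)
qed

section \<open>Reduced words\<close>

definition reduced_word :: "'i set \<Rightarrow> ('i \<Rightarrow> 'a sgrp) \<Rightarrow> ('i \<times> 'a) list \<Rightarrow> bool" where
  "reduced_word I S w \<longleftrightarrow> (\<forall>y\<in>set w. fst y \<in> I \<and> snd y \<in> sg_carrier (S (fst y))) \<and>
      successively (\<lambda>y z. fst y \<noteq> fst z) w"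

lemma fp_carrier_eq: "fp_carrier I S = {w. w \<noteq> [] \<and> reduced_word I S w}"
  unfolding fp_carrier_def reduced_word_def successively_conv_nth
  by (auto simp: all_set_conv_all_nth)

lemma reduced_word_Nil [simp]: "reduced_word I S []"
  by (simp add: reduced_word_def)

lemma reduced_word_Cons:
  "reduced_word I S (y # w) \<longleftrightarrow> fst y \<in> I \<and> snd y \<in> sg_carrier (S (fst y)) \<and> reduced_word I S w \<and>
     (w \<noteq> [] \<longrightarrow> fst y \<noteq> fst (hd w))"
  by (auto simp: reduced_word_def successively_Cons)

lemma reduced_word_append:
  "reduced_word I S (u @ v) \<longleftrightarrow> reduced_word I S u \<and> reduced_word I S v \<and>
     (u \<noteq> [] \<longrightarrow> v \<noteq> [] \<longrightarrow> fst (last u) \<noteq> fst (hd v))"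
  by (auto simp: reduced_word_def successively_append_iff)

lemma fp_mult_Nil [simp]: "fp_mult S [] v = v" "fp_mult S u [] = u"
  by (auto simp: fp_mult_def)

lemma fp_mult_snoc_Cons:
  "fp_mult S (u @ [(k, a)]) ((l, b) # v) =
     (if k = l then u @ (k, sg_mult (S k) a b) # v else u @ (k, a) # (l, b) # v)"
  by (simp add: fp_mult_def)

lemma fp_mult_eq_Nil_iff: "fp_mult S u v = [] \<longleftrightarrow> u = [] \<and> v = []"
  by (auto simp: fp_mult_def)

lemma reduced_word_fp_mult:
  assumes S: "\<forall>i\<in>I. is_semigroup (S i)" and u: "reduced_word I S u" and v: "reduced_word I S v"
  shows "reduced_word I S (fp_mult S u v)"
proof (cases "u = [] \<or> v = []")
  case True
  then show ?thesis using u v by auto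
next
  case False
  then obtain u0 k a l b v0 where u_eq: "u = u0 @ [(k, a)]" and v_eq: "v = (l, b) # v0"
    by (metis rev_exhaust list.exhaust prod.exhaust)
  have u': "reduced_word I S u0" "k \<in> I" "a \<in> sg_carrier (S k)" "u0 \<noteq> [] \<longrightarrow> fst (last u0) \<noteq> k"
    using u unfolding u_eq reduced_word_append reduced_word_Cons by auto
  have v': "reduced_word I S v0" "l \<in> I" "b \<in> sg_carrier (S l)" "v0 \<noteq> [] \<longrightarrow> l \<noteq> fst (hd v0)"
    using v unfolding v_eq reduced_word_Cons by auto
  have "k = l \<Longrightarrow> sg_mult (S k) a b \<in> sg_carrier (S k)"
    using is_semigroup_closed[of "S k"] S u' v' by simp
  then show ?thesis
    unfolding u_eq v_eq fp_mult_snoc_Cons using u' v'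
    by (auto simp: reduced_word_append reduced_word_Cons)
qed

lemma fp_mult_assoc:
  assumes S: "\<forall>i\<in>I. is_semigroup (S i)"
    and u: "reduced_word I S u" and v: "reduced_word I S v" and w: "reduced_word I S w"
  shows "fp_mult S (fp_mult S u v) w = fp_mult S u (fp_mult S v w)"
proof (cases "u = [] \<or> v = [] \<or> w = []")
  case True
  then show ?thesis by auto
next
  case False
  then obtain u0 k a j b v1 l c w0 where u_eq: "u = u0 @ [(k, a)]" and v_eq: "v = (j, b) # v1"
    and w_eq: "w = (l, c) # w0"
    by (metis rev_exhaust list.exhaust prod.exhaust)
  show ?thesis
  proof (cases "v1 = []")
    case True
    have "k \<in> I" "a \<in> sg_carrier (S k)" "l \<in> I" "c \<in> sg_carrier (S l)" "j \<in> I" "b \<in> sg_carrier (S j)"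
      using u v w unfolding u_eq v_eq w_eq reduced_word_append reduced_word_Cons by auto
    then have "k = j \<Longrightarrow> j = l \<Longrightarrow>
        sg_mult (S j) (sg_mult (S j) a b) c = sg_mult (S j) a (sg_mult (S j) b c)"
      using is_semigroup_assoc[of "S j"] S by simp
    then show ?thesis
      unfolding u_eq v_eq w_eq True by (simp add: fp_mult_def butlast_append)
  next
    case False
    then obtain v2 j' b' where "v1 = v2 @ [(j', b')]"
      by (metis rev_exhaust prod.exhaust)
    then show ?thesis
      unfolding u_eq v_eq w_eq by (simp add: fp_mult_def butlast_append)
  qed
qed

lemma is_semigroup_free_product:
  assumes "\<forall>i\<in>I. is_semigroup (S i)"
  shows "is_semigroup (free_product I S)"
  unfolding is_semigroup_def free_product_def
  using reduced_word_fp_mult[OF assms] fp_mult_assoc[OF assms]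
  by (simp add: fp_carrier_eq fp_mult_eq_Nil_iff)

locale free_product_one =
  fixes I :: "'i set" and S :: "'i \<Rightarrow> 'a sgrp"
  assumes semigroup_factors: "\<forall>i\<in>I. is_semigroup (S i)"
begin

abbreviation "F \<equiv> free_product I S"
abbreviation "T \<equiv> adjoin_one F"

text \<open>\<open>word\<close> and \<open>of_word\<close> identify \<open>T\<close> with the reduced words, the empty word standing for the
  identity of \<open>T\<close>.  They are mutually inverse except when \<open>F\<close> is itself a monoid: then \<open>of_word\<close>
  sends the empty word to the identity of \<open>F\<close>, a one-letter word.\<close>
definition word :: "('i \<times> 'a) list option \<Rightarrow> ('i \<times> 'a) list" where
  "word p = (case p of None \<Rightarrow> [] | Some w \<Rightarrow> w)"

definition of_word :: "('i \<times> 'a) list \<Rightarrow> ('i \<times> 'a) list option" where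
  "of_word w = (if w = [] then adjoin_one_unit F else Some w)"

lemma semigroup_F: "is_semigroup F"
  by (rule is_semigroup_free_product[OF semigroup_factors])

lemma semigroup_T: "is_semigroup T"
  by (rule is_semigroup_adjoin_one[OF semigroup_F])

lemma carrier_F: "sg_carrier F = {w. w \<noteq> [] \<and> reduced_word I S w}"
  by (simp add: free_product_def fp_carrier_eq)

lemma mult_F: "sg_mult F = fp_mult S"
  by (simp add: free_product_def)

lemma
  assumes "p \<in> sg_carrier T"
  shows reduced_word_word: "reduced_word I S (word p)"
    and word_eq_Nil_iff: "word p = [] \<longleftrightarrow> p = None"
  using assms by (cases rule: adjoin_one_carrier_cases; simp add: word_def carrier_F)+

lemma Some_word: "word p \<noteq> [] \<Longrightarrow> p = Some (word p)"
  by (cases p) (auto simp: word_def)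

lemma adjoin_one_unit_F_eq_None: "None \<in> sg_carrier T \<Longrightarrow> adjoin_one_unit F = None"
  by (simp add: adjoin_one_unit_def None_in_adjoin_one_iff)

lemma word_mult:
  assumes p: "p \<in> sg_carrier T" and q: "q \<in> sg_carrier T"
  shows "word (sg_mult T p q) = fp_mult S (word p) (word q)"
  using p q
  by (cases rule: adjoin_one_carrier_cases; cases rule: adjoin_one_carrier_cases[OF q])
    (simp_all add: word_def mult_F adjoin_one_mult_None_left adjoin_one_mult_None_right)

lemma of_word_in: "reduced_word I S w \<Longrightarrow> of_word w \<in> sg_carrier T"
  using adjoin_one_unit_in by (auto simp: of_word_def carrier_F)

lemma of_word_word: "p \<in> sg_carrier T \<Longrightarrow> of_word (word p) = p"
  by (cases rule: adjoin_one_carrier_cases)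
    (auto simp: of_word_def word_def adjoin_one_unit_F_eq_None carrier_F)

lemma of_word_mult:
  assumes "reduced_word I S v" and "reduced_word I S w"
  shows "sg_mult T (of_word v) (of_word w) = of_word (fp_mult S v w)"
proof (cases "v = [] \<or> w = []")
  case True
  then show ?thesis
    using adjoin_one_unit_mult[OF of_word_in[OF assms(2)]] mult_adjoin_one_unit[OF of_word_in[OF assms(1)]]
    by (auto simp: of_word_def)
next
  case False
  then show ?thesis
    by (simp add: of_word_def mult_F fp_mult_eq_Nil_iff)
qed

lemma monoid_F_imp:
  assumes F: "is_monoid_sg F" and i: "i \<in> I" and s: "s \<in> sg_carrier (S i)"
  shows "is_monoid_sg (S i) \<and> sg_one F = [(i, sg_one (S i))]"
proof -
  let ?E = "sg_one F"
  have E_mult: "fp_mult S ?E w = w" "fp_mult S w ?E = w" if "w \<in> sg_carrier F" for w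
    using sg_one_mult[OF F that] mult_sg_one[OF F that] by (simp_all add: mult_F)
  have letter_in: "[(i, t)] \<in> sg_carrier F" if "t \<in> sg_carrier (S i)" for t
    using that i by (simp add: carrier_F reduced_word_Cons)
  have "?E \<noteq> []" and E_reduced: "reduced_word I S ?E"
    using sg_one_in[OF F] by (auto simp: carrier_F)
  then obtain E0 k a where E0: "?E = E0 @ [(k, a)]"
    by (metis rev_exhaust prod.exhaust)
  have "fp_mult S (E0 @ [(k, a)]) [(i, s)] = [(i, s)]"
    using E_mult(1)[OF letter_in[OF s]] E0 by simp
  then have "k = i" "E0 = []"
    unfolding fp_mult_snoc_Cons by (auto split: if_splits simp: append_eq_Cons_conv)
  then have E: "?E = [(i, a)]"
    using E0 by simp
  have a: "a \<in> sg_carrier (S i)"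
    using E_reduced E by (simp add: reduced_word_Cons)
  have "sg_mult (S i) a t = t \<and> sg_mult (S i) t a = t" if "t \<in> sg_carrier (S i)" for t
    using E_mult[OF letter_in[OF that]] E by (simp add: fp_mult_def)
  then show ?thesis
    using sg_one_unique[OF a] E by auto
qed

end

section \<open>A factor inside the free product\<close>

locale free_product_factor = free_product_one I S for I :: "'i set" and S :: "'i \<Rightarrow> 'a sgrp" +
  fixes i :: 'i
  assumes i_in: "i \<in> I" and factor_nonempty: "sg_carrier (S i) \<noteq> {}"
begin

abbreviation "U \<equiv> adjoin_one (S i)"

definition letters :: "'a option \<Rightarrow> ('i \<times> 'a) list" where
  "letters u = (case u of None \<Rightarrow> [] | Some s \<Rightarrow> [(i, s)])"

definition emb :: "'a option \<Rightarrow> ('i \<times> 'a) list option" where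
  "emb u = of_word (letters u)"

definition R :: "('i \<times> 'a) list option set" where
  "R = {p \<in> sg_carrier T. word p = [] \<or> (\<exists>s\<in>sg_carrier (S i). word p = [(i, s)])}"

text \<open>If \<open>S i\<close> is a monoid but \<open>F\<close> is not, \<open>proj\<close> sends the identity \<open>None\<close> of \<open>T\<close> to the identity
  \<open>Some (sg_one (S i))\<close>; this is the only point of \<open>R\<close> where \<open>emb (proj p) \<noteq> p\<close>.\<close>
definition proj :: "('i \<times> 'a) list option \<Rightarrow> 'a option" where
  "proj p = (case word p of [] \<Rightarrow> adjoin_one_unit (S i) | y # _ \<Rightarrow> Some (snd y))"

lemma semigroup_S_i: "is_semigroup (S i)"
  using semigroup_factors i_in by blast

lemma semigroup_U: "is_semigroup U"
  by (rule is_semigroup_adjoin_one[OF semigroup_S_i])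

lemma letter_in_T: "s \<in> sg_carrier (S i) \<Longrightarrow> Some [(i, s)] \<in> sg_carrier T"
  using i_in by (simp add: carrier_F reduced_word_Cons)

lemma letter_in_R: "s \<in> sg_carrier (S i) \<Longrightarrow> Some [(i, s)] \<in> R"
  using letter_in_T by (auto simp: R_def word_def)

lemma None_in_R_iff: "None \<in> R \<longleftrightarrow> None \<in> sg_carrier T"
  by (simp add: R_def word_def)

lemma R_cases:
  assumes "p \<in> R"
  obtains "p = None" "None \<in> sg_carrier T" | s where "s \<in> sg_carrier (S i)" "p = Some [(i, s)]"
  using assms word_eq_Nil_iff Some_word unfolding R_def by fastforce

lemma None_in_U_imp: "None \<in> sg_carrier U \<Longrightarrow> None \<in> sg_carrier T"
  using monoid_F_imp[OF _ i_in] factor_nonempty by (auto simp: None_in_adjoin_one_iff)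

lemma unit_F_in_R: "adjoin_one_unit F \<in> R"
  and proj_unit_F: "proj (adjoin_one_unit F) = adjoin_one_unit (S i)"
proof -
  have "adjoin_one_unit F \<in> R \<and> proj (adjoin_one_unit F) = adjoin_one_unit (S i)"
  proof (cases "is_monoid_sg F")
    case True
    with monoid_F_imp[OF _ i_in] factor_nonempty
    have "is_monoid_sg (S i)" "sg_one F = [(i, sg_one (S i))]"
      by auto
    then show ?thesis
      using True letter_in_R[OF sg_one_in] by (simp add: adjoin_one_unit_def proj_def word_def)
  next
    case False
    then show ?thesis
      using None_in_R_iff None_in_U_imp
      by (auto simp: adjoin_one_unit_def proj_def word_def None_in_adjoin_one_iff)
  qed
  then show "adjoin_one_unit F \<in> R" "proj (adjoin_one_unit F) = adjoin_one_unit (S i)"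
    by simp_all
qed

lemma reduced_word_letters:
  assumes "u \<in> sg_carrier U"
  shows "reduced_word I S (letters u)"
  using assms i_in by (cases rule: adjoin_one_carrier_cases) (auto simp: letters_def reduced_word_Cons)

lemma letters_mult:
  assumes u: "u \<in> sg_carrier U" and v: "v \<in> sg_carrier U"
  shows "letters (sg_mult U u v) = fp_mult S (letters u) (letters v)"
  using u v
  by (cases rule: adjoin_one_carrier_cases; cases rule: adjoin_one_carrier_cases[OF v])
    (simp_all add: letters_def fp_mult_def adjoin_one_mult_None_left adjoin_one_mult_None_right)

lemma emb_Some: "emb (Some s) = Some [(i, s)]"
  by (simp add: emb_def letters_def of_word_def)

lemma emb_in_R:
  assumes "u \<in> sg_carrier U"
  shows "emb u \<in> R"
  using assms unit_F_in_R letter_in_R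
  by (cases rule: adjoin_one_carrier_cases) (auto simp: emb_def letters_def of_word_def)

lemma proj_emb:
  assumes u: "u \<in> sg_carrier U"
  shows "proj (emb u) = u"
  using u
proof (cases rule: adjoin_one_carrier_cases)
  case 1
  then have "adjoin_one_unit (S i) = None"
    using u by (simp add: adjoin_one_unit_def None_in_adjoin_one_iff)
  then show ?thesis
    using 1 proj_unit_F by (simp add: emb_def letters_def of_word_def)
qed (simp add: emb_Some proj_def word_def)

lemma emb_mult:
  "u \<in> sg_carrier U \<Longrightarrow> v \<in> sg_carrier U \<Longrightarrow> emb (sg_mult U u v) = sg_mult T (emb u) (emb v)"
  by (simp add: emb_def letters_mult of_word_mult reduced_word_letters)

lemma proj_Some_letter: "proj (Some [(i, s)]) = Some s"
  by (simp add: proj_def word_def)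

lemma proj_None: "proj None = adjoin_one_unit (S i)"
  by (simp add: proj_def word_def)

lemma proj_in: "p \<in> R \<Longrightarrow> proj p \<in> sg_carrier U"
  using adjoin_one_unit_in by (auto elim!: R_cases simp: proj_Some_letter proj_None)

lemma
  assumes p: "p \<in> R" and q: "q \<in> R"
  shows mult_in_R: "sg_mult T p q \<in> R"
    and proj_mult: "proj (sg_mult T p q) = sg_mult U (proj p) (proj q)"
proof -
  have "sg_mult T p q \<in> R \<and> proj (sg_mult T p q) = sg_mult U (proj p) (proj q)"
    using p
  proof (cases rule: R_cases)
    case 1
    then show ?thesis
      using q adjoin_one_mult_None_left[OF 1(2)] adjoin_one_unit_mult[OF proj_in[OF q]]
      by (simp add: proj_None)
  next
    case (2 s)
    from q show ?thesis
    proof (cases rule: R_cases)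
      case 1
      then show ?thesis
        using p adjoin_one_mult_None_right[OF 1(2)] mult_adjoin_one_unit[OF proj_in[OF p]]
        by (simp add: proj_None)
    next
      case (2 t)
      then show ?thesis
        using \<open>p = Some [(i, s)]\<close> \<open>s \<in> sg_carrier (S i)\<close> letter_in_R is_semigroup_closed[OF semigroup_S_i]
        by (simp add: mult_F fp_mult_def proj_Some_letter)
    qed
  qed
  then show "sg_mult T p q \<in> R" "proj (sg_mult T p q) = sg_mult U (proj p) (proj q)"
    by simp_all
qed

lemma factors_in_R:
  assumes p: "p \<in> sg_carrier T" and q: "q \<in> sg_carrier T" and pq: "sg_mult T p q \<in> R"
  shows "p \<in> R \<and> q \<in> R"
proof (cases "word p = [] \<or> word q = []")
  case True
  then have "p = None \<and> None \<in> sg_carrier T \<or> q = None \<and> None \<in> sg_carrier T"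
    using word_eq_Nil_iff p q by auto
  then show ?thesis
    using pq p q adjoin_one_mult_None_left adjoin_one_mult_None_right None_in_R_iff by metis
next
  case False
  then obtain p0 k a l b q0 where p_eq: "word p = p0 @ [(k, a)]" and q_eq: "word q = (l, b) # q0"
    by (metis rev_exhaust list.exhaust prod.exhaust)
  have "word (sg_mult T p q) \<noteq> []"
    using False by (simp add: word_mult[OF p q] fp_mult_eq_Nil_iff)
  then obtain c where "word (sg_mult T p q) = [(i, c)]"
    using pq by (auto simp: R_def)
  then have "(if k = l then p0 @ (k, sg_mult (S k) a b) # q0 else p0 @ (k, a) # (l, b) # q0) = [(i, c)]"
    unfolding word_mult[OF p q] p_eq q_eq fp_mult_snoc_Cons .
  then have "k = i" "l = i" "p0 = []" "q0 = []"
    by (auto split: if_splits simp: append_eq_Cons_conv)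
  moreover have "a \<in> sg_carrier (S k)" "b \<in> sg_carrier (S l)"
    using reduced_word_word[OF p] reduced_word_word[OF q] p_eq q_eq
    by (auto simp: reduced_word_append reduced_word_Cons)
  ultimately show ?thesis
    using p q p_eq q_eq unfolding R_def by auto
qed

sublocale retract: sg_retract T U R proj emb
proof
  show "R \<subseteq> sg_carrier T"
    by (auto simp: R_def)
  then show "sg_mult T p q \<in> R \<longleftrightarrow> p \<in> R \<and> q \<in> R"
    if "p \<in> sg_carrier T" "q \<in> sg_carrier T" for p q
    using that factors_in_R mult_in_R by blast
qed (simp_all add: semigroup_T semigroup_U proj_in proj_mult emb_in_R proj_emb emb_mult)

lemma fin_gen_r_ann_factor:
  assumes "x \<in> sg_carrier (S i)" and "fin_gen_right_congruence T (r_ann T (Some [(i, x)]))"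
  shows "fin_gen_right_congruence U (r_ann U (Some x))"
  using retract.fin_gen_r_ann_of_emb[of "Some x"] assms by (simp add: emb_Some)

definition split_head :: "('i \<times> 'a) list \<Rightarrow> ('i \<times> 'a) list \<times> ('i \<times> 'a) list" where
  "split_head w = (if w \<noteq> [] \<and> fst (hd w) = i then ([hd w], tl w) else ([], w))"

definition head :: "('i \<times> 'a) list option \<Rightarrow> ('i \<times> 'a) list option" where
  "head s = of_word (fst (split_head (word s)))"

definition tail :: "('i \<times> 'a) list option \<Rightarrow> ('i \<times> 'a) list option" where
  "tail s = of_word (snd (split_head (word s)))"

lemma
  assumes "reduced_word I S w"
  shows reduced_word_fst_split_head: "reduced_word I S (fst (split_head w))"
    and reduced_word_snd_split_head: "reduced_word I S (snd (split_head w))"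
    and of_word_fst_split_head_in_R: "of_word (fst (split_head w)) \<in> R"
  using assms unit_F_in_R letter_in_R
  by (cases w; auto simp: split_head_def reduced_word_Cons of_word_def)+

lemma fp_mult_split_head:
  assumes "reduced_word I S w"
  shows "fp_mult S (fst (split_head w)) (snd (split_head w)) = w"
  using assms
  by (cases w; cases "tl w") (auto simp: split_head_def fp_mult_def reduced_word_Cons)

lemma fp_mult_snoc_split_head:
  "fp_mult S (v @ [(i, x)]) w = v @ fp_mult S [(i, x)] (fst (split_head w)) @ snd (split_head w)"
  by (cases w) (auto simp: split_head_def fp_mult_def)

lemma length_fp_mult_letter_split_head: "length (fp_mult S [(i, x)] (fst (split_head w))) = 1"
  by (simp add: split_head_def fp_mult_def)

lemma head_tail_split:
  assumes s: "s \<in> sg_carrier T"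
  shows "head s \<in> R \<and> tail s \<in> sg_carrier T \<and> s = sg_mult T (head s) (tail s)"
  using reduced_word_word[OF s] of_word_fst_split_head_in_R of_word_in reduced_word_snd_split_head
    of_word_mult reduced_word_fst_split_head fp_mult_split_head of_word_word[OF s]
  by (simp add: head_def tail_def)

lemma emb_mult_R:
  assumes x: "x \<in> sg_carrier (S i)" and p: "p \<in> R"
  shows "sg_mult T (emb (Some x)) p = emb (sg_mult U (Some x) (proj p))"
  using p
proof (cases rule: R_cases)
  case 1
  then show ?thesis
    using adjoin_one_mult_None_right[OF 1(2)] mult_adjoin_one_unit[of "Some x"] x
    by (simp add: proj_None)
next
  case (2 s)
  then show ?thesis
    using emb_mult[of "Some x" "Some s"] x by (simp add: emb_Some proj_Some_letter)
qed

lemma emb_mult_proj_head: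
  assumes x: "x \<in> sg_carrier (S i)" and s: "s \<in> sg_carrier T"
  shows "emb (sg_mult U (Some x) (proj (head s))) = Some (fp_mult S [(i, x)] (fst (split_head (word s))))"
proof -
  let ?h = "fst (split_head (word s))"
  have "emb (sg_mult U (Some x) (proj (head s))) = sg_mult T (of_word [(i, x)]) (of_word ?h)"
    using emb_mult_R[OF x] of_word_fst_split_head_in_R[OF reduced_word_word[OF s]]
    by (simp add: head_def emb_Some of_word_def)
  also have "\<dots> = of_word (fp_mult S [(i, x)] ?h)"
    using of_word_mult i_in x reduced_word_fst_split_head[OF reduced_word_word[OF s]]
    by (simp add: reduced_word_Cons)
  finally show ?thesis
    using length_fp_mult_letter_split_head[of x "word s"] by (auto simp: of_word_def)
qed

lemma mult_eq_imp_split_eq: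
  assumes a: "a \<in> sg_carrier T" and a_eq: "word a = v @ [(i, x)]" and x: "x \<in> sg_carrier (S i)"
    and s: "s \<in> sg_carrier T" and t: "t \<in> sg_carrier T" and eq: "sg_mult T a s = sg_mult T a t"
  shows "tail s = tail t \<and> sg_mult U (Some x) (proj (head s)) = sg_mult U (Some x) (proj (head t))"
proof -
  have "word (sg_mult T a s) = word (sg_mult T a t)"
    using eq by simp
  then have "fp_mult S [(i, x)] (fst (split_head (word s))) = fp_mult S [(i, x)] (fst (split_head (word t)))
      \<and> snd (split_head (word s)) = snd (split_head (word t))"
    using length_fp_mult_letter_split_head[of x]
    by (simp add: word_mult[OF a s] word_mult[OF a t] a_eq fp_mult_snoc_split_head length_Suc_conv)
  then have "tail s = tail t"
    and "emb (sg_mult U (Some x) (proj (head s))) = emb (sg_mult U (Some x) (proj (head t)))"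
    using emb_mult_proj_head[OF x s] emb_mult_proj_head[OF x t] by (simp_all add: tail_def)
  moreover have "sg_mult U (Some x) (proj (head r)) \<in> sg_carrier U" if "r \<in> sg_carrier T" for r
    using head_tail_split[OF that] is_semigroup_closed[OF semigroup_U _ proj_in] x by simp
  ultimately show ?thesis
    using proj_emb s t by metis
qed

lemma fin_gen_r_ann_ending_in_factor:
  assumes a: "a \<in> sg_carrier T" and a_eq: "word a = v @ [(i, x)]"
    and fg: "fin_gen_right_congruence U (r_ann U (Some x))"
  shows "fin_gen_right_congruence T (r_ann T a)"
proof -
  have v: "reduced_word I S v" "v \<noteq> [] \<longrightarrow> fst (last v) \<noteq> i" and x: "x \<in> sg_carrier (S i)"
    using reduced_word_word[OF a] a_eq by (auto simp: reduced_word_append reduced_word_Cons)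
  have "fp_mult S v [(i, x)] = v @ [(i, x)]"
    using v(2) by (auto simp: fp_mult_def)
  then have a_split: "a = sg_mult T (of_word v) (emb (Some x))"
    using of_word_mult[OF v(1), of "[(i, x)]"] i_in x of_word_word[OF a] a_eq
    by (simp add: emb_Some of_word_def reduced_word_Cons)
  have "{p \<in> R. p \<noteq> emb (proj p)} \<subseteq> {None}"
    by (auto elim!: R_cases simp: emb_Some proj_Some_letter)
  then have "finite {p \<in> R. p \<noteq> emb (proj p)}"
    by (rule finite_subset) simp
  moreover have "Some x \<in> sg_carrier U"
    using x by simp
  ultimately show ?thesis
    using retract.fin_gen_r_ann_of_split[OF _ of_word_in[OF v(1)] a_split emb_mult_R[OF x] _
        head_tail_split mult_eq_imp_split_eq[OF a a_eq x] fg]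
    by blast
qed

end

context free_product_one
begin

lemma fin_right_equated_factor:
  assumes T: "fin_right_equated T" and i: "i \<in> I"
  shows "fin_right_equated (adjoin_one (S i))"
proof (rule fin_right_equated_adjoin_oneI)
  show "is_semigroup (S i)"
    using semigroup_factors i by blast
  fix x assume x: "x \<in> sg_carrier (S i)"
  interpret free_product_factor I S i
    using i x by unfold_locales auto
  show "fin_gen_right_congruence (adjoin_one (S i)) (r_ann (adjoin_one (S i)) (Some x))"
    using fin_gen_r_ann_factor[OF x] T letter_in_T[OF x] unfolding fin_right_equated_def by blast
qed

lemma fin_right_equated_free_product:
  assumes factors: "\<forall>i\<in>I. fin_right_equated (adjoin_one (S i))"
  shows "fin_right_equated T"
proof (rule fin_right_equated_adjoin_oneI[OF semigroup_F])
  fix w assume w: "w \<in> sg_carrier F"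
  then have "w \<noteq> []" and w_reduced: "reduced_word I S w"
    by (simp_all add: carrier_F)
  then obtain v i x where w_eq: "w = v @ [(i, x)]"
    by (metis rev_exhaust prod.exhaust)
  then have i: "i \<in> I" and x: "x \<in> sg_carrier (S i)"
    using w_reduced by (simp_all add: reduced_word_append reduced_word_Cons)
  interpret free_product_factor I S i
    using i x by unfold_locales auto
  have "fin_gen_right_congruence U (r_ann U (Some x))"
    using factors i x unfolding fin_right_equated_def by simp
  then show "fin_gen_right_congruence T (r_ann T (Some w))"
    using fin_gen_r_ann_ending_in_factor[of "Some w" v x] w w_eq by (simp add: word_def)
qed

end

theorem mainTheorem9:
  fixes I :: "'i set" and S :: "'i \<Rightarrow> 'a sgrp"
  assumes "\<forall>i\<in>I. is_semigroup (S i)"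
  shows "fin_right_equated (adjoin_one (free_product I S)) \<longleftrightarrow>
         (\<forall>i\<in>I. fin_right_equated (adjoin_one (S i)))"
proof -
  interpret free_product_one I S
    using assms by unfold_locales
  show ?thesis
    using fin_right_equated_factor fin_right_equated_free_product by (intro iffI ballI) simp_all
qed

end
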